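(* Consider $K\ge2$ arms and the quantities in the context, with $0<\alpha\le 8$ and $T\ge\max\{40/\alpha+1,40\}K$. Then for every real $k$ with $0\le k<\Lambda$, \[ \Pr\Big(\sum_{i=1}^K\tau_{i,\Lambda-k}\le T\Big)\ge 1-\exp(-40k/\alpha). \]
   Context: Arm $i\in[K]$ has reward distribution $\mathcal{D}_i$ on $[0,1]$ with mean $\theta_i$; $\theta\in(0,1)$ is a threshold and $\Delta_i=|\theta_i-\theta|$ (convention $\ln(1/0)=+\infty$). For each $i$, $X_{i,1},X_{i,2},\dots$ are i.i.d. from $\mathcal{D}_i$, independent across arms; $\hat\Delta_{i,t}=|\frac1t\sum_{s\le t}X_{i,s}-\theta|$, $\xi_{i,t}=\alpha t\hat\Delta_{i,t}^2+0.5\ln t$, and for $C>0$, $\tau_{i,C}$ is the smallest positive integer $t$ with $\xi_{i,t}>C$. $M=\max\{40/\alpha+1,40\}$; $g_i(x)=e^{2x}$ if $x\le\ln\Delta_i^{-1}$ and $g_i(x)=\frac{x-\ln\Delta_i^{-1}+\alpha}{\alpha\Delta_i^2}$ otherwise; $\Lambda$ is the unique $x\ge0$ with $\sum_{i=1}^Kg_i(x)=T/M$. *)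

theory Defs
  imports "HOL-Probability.Probability"
begin

text \<open>Y s = s-th sample (s \<ge> 1) of one arm, th = threshold, al = alpha.\<close>

definition hatDelta :: "(nat \<Rightarrow> 'a \<Rightarrow> real) \<Rightarrow> real \<Rightarrow> nat \<Rightarrow> 'a \<Rightarrow> real" where
  "hatDelta Y th t \<omega> = \<bar>(\<Sum>s=1..t. Y s \<omega>) / real t - th\<bar>"

definition xi :: "(nat \<Rightarrow> 'a \<Rightarrow> real) \<Rightarrow> real \<Rightarrow> real \<Rightarrow> nat \<Rightarrow> 'a \<Rightarrow> real" where
  "xi Y th al t \<omega> = al * real t * (hatDelta Y th t \<omega>)\<^sup>2 + 0.5 * ln (real t)"

definition tau :: "(nat \<Rightarrow> 'a \<Rightarrow> real) \<Rightarrow> real \<Rightarrow> real \<Rightarrow> real \<Rightarrow> 'a \<Rightarrow> nat" where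
  "tau Y th al C \<omega> = (LEAST t::nat. 0 < t \<and> xi Y th al t \<omega> > C)"

definition Mconst :: "real \<Rightarrow> real" where
  "Mconst al = max (40 / al + 1) 40"

text \<open>g_i with Delta_i = D; the case D = 0 corresponds to ln(1/0) = +infinity.\<close>
definition gfun :: "real \<Rightarrow> real \<Rightarrow> real \<Rightarrow> real" where
  "gfun al D x = (if D = 0 \<or> x \<le> ln (1 / D) then exp (2 * x)
                  else (x - ln (1 / D) + al) / (al * D\<^sup>2))"

definition Lambda :: "real \<Rightarrow> real \<Rightarrow> (nat \<Rightarrow> real) \<Rightarrow> nat \<Rightarrow> real \<Rightarrow> real" where
  "Lambda al th mu K T =
     (THE x. 0 \<le> x \<and> (\<Sum>i<K. gfun al \<bar>mu i - th\<bar> x) = T / Mconst al)"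

end

(*
  Put C = Lambda - k and give arm i the budget B_i = M g_i(Lambda), so that the
  budgets add up to T by the choice of Lambda.  Since xi_t >= ln t / 2, every tau_{i,C} is at most
  ceil (e^{2C}) + 1, which is already within budget when C <= ln (1 / Delta_i).  For the remaining
  arms the empirical gap at any time n < tau is at most Delta_i / 4 once n is of order
  (1 + 16 (C - ln (1 / Delta_i)) / alpha) / Delta_i^2, so Hoeffding's inequality gives a geometric
  tail for tau and hence E exp (Delta_i^2 (tau - B_i)) <= exp (-40 k / alpha).  With lambda the
  smallest of these Delta_i^2, Jensen's inequality keeps every E exp (lambda (tau_i - B_i)) at most 1,
  and independence together with Markov's inequality yields
  P (sum_i tau_i > T) <= prod_i E exp (lambda (tau_i - B_i)) <= exp (-40 k / alpha).
*)

theory Submission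
  imports Defs
begin

lemma exp_two_ln_inverse:
  fixes D :: real
  assumes "0 < D"
  shows "exp (2 * ln (1 / D)) = 1 / D\<^sup>2"
proof -
  have "exp (2 * ln (1 / D)) = (exp (ln (1 / D)))\<^sup>2"
    using exp_of_nat_mult[of 2 "ln (1 / D)"] by simp
  also have "\<dots> = 1 / D\<^sup>2"
    using assms by (simp add: power_one_over)
  finally show ?thesis .
qed

lemma exp_mult_le_convex:
  fixes p a :: real
  assumes "0 \<le> p" "p \<le> 1"
  shows "exp (p * a) \<le> p * exp a + (1 - p)"
  using convex_onD[OF exp_convex, of p 0 a] assms by (simp add: algebra_simps)

lemma exp_le_one_plus_twice:
  fixes x :: real
  assumes "0 \<le> x" "x \<le> 1"
  shows "exp x \<le> 1 + 2 * x"
proof -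
  have "exp (x * 1) \<le> x * exp 1 + (1 - x)"
    using assms by (rule exp_mult_le_convex)
  moreover have "x * exp 1 \<le> x * 3"
    using exp_le assms(1) by (rule mult_left_mono)
  ultimately show ?thesis
    by simp
qed

lemma sum_exp_neg_le:
  fixes x :: real
  assumes "0 < x"
  shows "(\<Sum>n\<in>{1..<N}. exp (- x * real n)) \<le> 1 / x"
proof (cases "1 \<le> N")
  case True
  define f where "f i = - exp (- x * (real i - 1))" for i :: nat
  have "x * exp (- x * real n) \<le> f (Suc n) - f n" for n
  proof -
    have "f (Suc n) - f n = (exp x - 1) * exp (- x * real n)"
      by (simp add: f_def algebra_simps flip: exp_add)
    moreover have "x \<le> exp x - 1"
      using exp_ge_add_one_self[of x] by linarith
    ultimately show ?thesis
      by (simp add: mult_right_mono)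
  qed
  then have "x * (\<Sum>n\<in>{1..<N}. exp (- x * real n)) \<le> (\<Sum>n\<in>{1..<N}. f (Suc n) - f n)"
    by (simp add: sum_distrib_left sum_mono)
  also have "\<dots> = 1 - exp (- x * (real N - 1))"
    using True by (subst sum_Suc_diff') (simp_all add: f_def)
  also have "\<dots> \<le> 1"
    by simp
  finally show ?thesis
    using assms by (simp add: field_simps mult.commute)
qed (use assms in simp)

lemma sum_tail_telescope:
  fixes f :: "nat \<Rightarrow> 'b::ring_1"
  assumes "1 \<le> t" "t \<le> N"
  shows "f t = f 1 + (\<Sum>n\<in>{1..<N}. (f (Suc n) - f n) * of_bool (n < t))"
proof -
  have "(\<Sum>n\<in>{1..<N}. (f (Suc n) - f n) * of_bool (n < t)) = (\<Sum>n\<in>{1..<t}. f (Suc n) - f n)"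
    using assms by (intro sum.mono_neutral_cong_right) auto
  also have "\<dots> = f t - f 1"
    using assms(1) by (rule sum_Suc_diff')
  finally show ?thesis
    by simp
qed

section \<open>Exponential moments and Chernoff bounds\<close>

context prob_space
begin

lemma expectation_tail_sum:
  fixes \<tau> :: "'a \<Rightarrow> nat" and f :: "nat \<Rightarrow> real"
  assumes [measurable]: "\<tau> \<in> measurable M (count_space UNIV)"
    and bounds: "\<And>\<omega>. \<omega> \<in> space M \<Longrightarrow> 1 \<le> \<tau> \<omega> \<and> \<tau> \<omega> \<le> N"
  shows "expectation (\<lambda>\<omega>. f (\<tau> \<omega>))
    = f 1 + (\<Sum>n\<in>{1..<N}. (f (Suc n) - f n) * prob {\<omega>\<in>space M. n < \<tau> \<omega>})"
proof -
  let ?E = "\<lambda>n. {\<omega>\<in>space M. n < \<tau> \<omega>}"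
  have E [measurable]: "?E n \<in> events" for n
    by measurable
  have int: "integrable M (\<lambda>\<omega>. (f (Suc n) - f n) * indicator (?E n) \<omega>)" for n
    by (intro integrable_mult_right integrable_real_indicator) (auto simp: emeasure_eq_measure)
  have "f (\<tau> \<omega>) = f 1 + (\<Sum>n\<in>{1..<N}. (f (Suc n) - f n) * indicator (?E n) \<omega>)"
    if "\<omega> \<in> space M" for \<omega>
    using sum_tail_telescope[of "\<tau> \<omega>" N f] bounds[OF that] that by (simp add: indicator_def)
  then have "expectation (\<lambda>\<omega>. f (\<tau> \<omega>))
      = expectation (\<lambda>\<omega>. f 1 + (\<Sum>n\<in>{1..<N}. (f (Suc n) - f n) * indicator (?E n) \<omega>))"
    by (rule Bochner_Integration.integral_cong[OF refl])
  also have "\<dots> = expectation (\<lambda>\<omega>. f 1)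
      + (\<Sum>n\<in>{1..<N}. expectation (\<lambda>\<omega>. (f (Suc n) - f n) * indicator (?E n) \<omega>))"
    using int by (simp only: Bochner_Integration.integral_add Bochner_Integration.integral_sum
        Bochner_Integration.integrable_sum integrable_const)
  also have "\<dots> = f 1 + (\<Sum>n\<in>{1..<N}. (f (Suc n) - f n) * prob (?E n))"
    by (simp add: prob_space)
  finally show ?thesis .
qed

lemma expectation_exp_le_of_tail:
  fixes \<tau> :: "'a \<Rightarrow> nat" and c r A :: real
  assumes "\<tau> \<in> measurable M (count_space UNIV)"
    and "\<And>\<omega>. \<omega> \<in> space M \<Longrightarrow> 1 \<le> \<tau> \<omega> \<and> \<tau> \<omega> \<le> N"
    and "0 \<le> c" "c < r"
    and tail: "\<And>n. 1 \<le> n \<Longrightarrow> prob {\<omega>\<in>space M. n < \<tau> \<omega>} \<le> A * exp (- r * n)"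
  shows "expectation (\<lambda>\<omega>. exp (c * \<tau> \<omega>)) \<le> exp c + A * (exp c - 1) / (r - c)"
proof -
  let ?K = "A * (exp c - 1)"
  have "0 \<le> A"
    using order_trans[OF measure_nonneg tail[of 1]] by (simp add: zero_le_mult_iff)
  then have "0 \<le> ?K"
    using assms(3) by simp
  have "(exp (c * Suc n) - exp (c * n)) * prob {\<omega>\<in>space M. n < \<tau> \<omega>}
      \<le> ?K * exp (- (r - c) * n)" if "1 \<le> n" for n
  proof -
    have "(exp (c * Suc n) - exp (c * n)) * prob {\<omega>\<in>space M. n < \<tau> \<omega>}
        \<le> (exp (c * Suc n) - exp (c * n)) * (A * exp (- r * n))"
      using assms(3) tail[OF that] by (intro mult_left_mono) (auto intro: mult_left_mono)
    also have "\<dots> = ?K * exp (- (r - c) * n)"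
      by (simp add: algebra_simps flip: exp_add)
    finally show ?thesis .
  qed
  then have "(\<Sum>n\<in>{1..<N}. (exp (c * Suc n) - exp (c * n)) * prob {\<omega>\<in>space M. n < \<tau> \<omega>})
      \<le> ?K * (\<Sum>n\<in>{1..<N}. exp (- (r - c) * n))"
    unfolding sum_distrib_left by (intro sum_mono) auto
  also have "\<dots> \<le> ?K * (1 / (r - c))"
    using \<open>0 \<le> ?K\<close> assms(4) by (intro mult_left_mono sum_exp_neg_le) auto
  finally show ?thesis
    using expectation_tail_sum[OF assms(1,2), of "\<lambda>n. exp (c * n)"] by simp
qed

lemma integrable_exp_of_bounded:
  fixes X :: "'a \<Rightarrow> real"
  assumes "X \<in> borel_measurable M" "\<And>\<omega>. \<omega> \<in> space M \<Longrightarrow> X \<omega> \<le> b" "0 \<le> c"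
  shows "integrable M (\<lambda>\<omega>. exp (c * X \<omega>))"
proof (rule integrable_const_bound[where B = "exp (c * b)"])
  show "AE \<omega> in M. norm (exp (c * X \<omega>)) \<le> exp (c * b)"
    using assms(2,3) by (intro AE_I2) (simp add: mult_left_mono)
qed (use assms(1) in measurable)

lemma expectation_exp_scale_le:
  fixes X :: "'a \<Rightarrow> real"
  assumes "X \<in> borel_measurable M" "\<And>\<omega>. \<omega> \<in> space M \<Longrightarrow> X \<omega> \<le> b" "0 \<le> p" "p \<le> 1"
  shows "expectation (\<lambda>\<omega>. exp (p * X \<omega>)) \<le> p * expectation (\<lambda>\<omega>. exp (X \<omega>)) + (1 - p)"
proof -
  have int: "integrable M (\<lambda>\<omega>. exp (X \<omega>))"
    using integrable_exp_of_bounded[OF assms(1,2), of 1] by simp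
  have "expectation (\<lambda>\<omega>. exp (p * X \<omega>)) \<le> expectation (\<lambda>\<omega>. p * exp (X \<omega>) + (1 - p))"
    using assms int
    by (intro integral_mono integrable_exp_of_bounded exp_mult_le_convex Bochner_Integration.integrable_add
        integrable_mult_right) auto
  also have "\<dots> = p * expectation (\<lambda>\<omega>. exp (X \<omega>)) + (1 - p)"
    using int by (simp add: prob_space)
  finally show ?thesis .
qed

lemma expectation_exp_le_1_of_nonpos:
  fixes X :: "'a \<Rightarrow> real"
  assumes "X \<in> borel_measurable M" "\<forall>\<omega>\<in>space M. X \<omega> \<le> 0" "0 \<le> c"
  shows "expectation (\<lambda>\<omega>. exp (c * X \<omega>)) \<le> 1"
proof -
  have "expectation (\<lambda>\<omega>. exp (c * X \<omega>)) \<le> expectation (\<lambda>\<omega>. 1)"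
    using assms by (intro integral_mono integrable_exp_of_bounded[where b = 0]) (auto simp: mult_nonneg_nonpos)
  then show ?thesis
    by (simp add: prob_space)
qed

lemma expectation_exp_le_1_of_larger_exponent:
  fixes X :: "'a \<Rightarrow> real"
  assumes "X \<in> borel_measurable M" "\<And>\<omega>. \<omega> \<in> space M \<Longrightarrow> X \<omega> \<le> b"
    and "0 \<le> c'" "c' \<le> c" "expectation (\<lambda>\<omega>. exp (c * X \<omega>)) \<le> 1"
  shows "expectation (\<lambda>\<omega>. exp (c' * X \<omega>)) \<le> 1"
proof (cases "c = 0")
  case True
  then show ?thesis
    using assms(3,4) by (simp add: prob_space)
next
  case False
  define p where "p = c' / c"
  have "0 < c"
    using False assms(3,4) by simp
  then have p: "0 \<le> p" "p \<le> 1" and "c' = p * c"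
    using assms(3,4) by (auto simp: p_def)
  have "expectation (\<lambda>\<omega>. exp (p * (c * X \<omega>))) \<le> p * expectation (\<lambda>\<omega>. exp (c * X \<omega>)) + (1 - p)"
    using assms(1,2) \<open>0 < c\<close> p
    by (intro expectation_exp_scale_le[where b = "c * b"]) (auto intro: mult_left_mono)
  also have "\<dots> \<le> 1"
    using p assms(5) by (smt (verit) mult_left_le)
  finally show ?thesis
    by (simp add: \<open>c' = p * c\<close> mult.assoc)
qed

lemma prob_sum_pos_le_prod:
  fixes W :: "'i \<Rightarrow> 'a \<Rightarrow> real"
  assumes "finite I" "indep_vars (\<lambda>_. borel) W I"
    and bounded: "\<And>i \<omega>. i \<in> I \<Longrightarrow> \<omega> \<in> space M \<Longrightarrow> W i \<omega> \<le> b" and "0 \<le> c"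
  shows "prob {\<omega>\<in>space M. 0 < (\<Sum>i\<in>I. W i \<omega>)} \<le> (\<Prod>i\<in>I. expectation (\<lambda>\<omega>. exp (c * W i \<omega>)))"
proof -
  let ?F = "{\<omega>\<in>space M. 0 < (\<Sum>i\<in>I. W i \<omega>)}"
  let ?Z = "\<lambda>i \<omega>. exp (c * W i \<omega>)"
  have W [measurable]: "W i \<in> borel_measurable M" if "i \<in> I" for i
    using assms(2) that by (simp add: indep_vars_def)
  have "(\<lambda>\<omega>. \<Sum>i\<in>I. W i \<omega>) \<in> borel_measurable M"
    using W by (rule borel_measurable_sum)
  then have F: "?F \<in> events"
    by measurable
  have int: "integrable M (?Z i)" if "i \<in> I" for i
    using W bounded that assms(4) by (intro integrable_exp_of_bounded) auto
  have indep: "indep_vars (\<lambda>_. borel) ?Z I"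
    using assms(2) by (rule indep_vars_compose2) measurable
  have "indicator ?F \<omega> \<le> (\<Prod>i\<in>I. ?Z i \<omega>)" if "\<omega> \<in> space M" for \<omega>
  proof (cases "\<omega> \<in> ?F")
    case True
    then have "1 \<le> exp (c * (\<Sum>i\<in>I. W i \<omega>))"
      using assms(4) by simp
    then show ?thesis
      using True assms(1) by (simp add: sum_distrib_left exp_sum)
  qed (simp add: prod_nonneg)
  then have "expectation (indicator ?F) \<le> expectation (\<lambda>\<omega>. \<Prod>i\<in>I. ?Z i \<omega>)"
    using F int assms(1) indep
    by (intro integral_mono indep_vars_integrable integrable_real_indicator) (auto simp: emeasure_eq_measure)
  moreover have "?F \<inter> space M = ?F"
    by auto
  ultimately have "prob ?F \<le> expectation (\<lambda>\<omega>. \<Prod>i\<in>I. ?Z i \<omega>)"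
    by simp
  also have "\<dots> = (\<Prod>i\<in>I. expectation (?Z i))"
    using assms(1) indep int by (rule indep_vars_lebesgue_integral)
  finally show ?thesis .
qed

lemma prob_sum_pos_le_exp_moment:
  fixes W :: "'i \<Rightarrow> 'a \<Rightarrow> real"
  assumes "finite I" "indep_vars (\<lambda>_. borel) W I"
    and "\<And>i \<omega>. i \<in> I \<Longrightarrow> \<omega> \<in> space M \<Longrightarrow> W i \<omega> \<le> b" and "0 \<le> c"
    and "j \<in> I" "expectation (\<lambda>\<omega>. exp (c * W j \<omega>)) \<le> \<rho>"
    and "\<And>i. i \<in> I \<Longrightarrow> expectation (\<lambda>\<omega>. exp (c * W i \<omega>)) \<le> 1"
  shows "prob {\<omega>\<in>space M. 0 < (\<Sum>i\<in>I. W i \<omega>)} \<le> \<rho>"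
proof -
  have "prob {\<omega>\<in>space M. 0 < (\<Sum>i\<in>I. W i \<omega>)} \<le> (\<Prod>i\<in>I. expectation (\<lambda>\<omega>. exp (c * W i \<omega>)))"
    using assms(1-4) by (rule prob_sum_pos_le_prod)
  also have "\<dots> = expectation (\<lambda>\<omega>. exp (c * W j \<omega>))
      * (\<Prod>i\<in>I - {j}. expectation (\<lambda>\<omega>. exp (c * W i \<omega>)))"
    using assms(1,5) by (rule prod.remove)
  also have "\<dots> \<le> \<rho> * 1"
    using assms(6,7) order_trans[OF Bochner_Integration.integral_nonneg assms(6)]
    by (intro mult_mono prod_le_1 prod_nonneg conjI Bochner_Integration.integral_nonneg) auto
  finally show ?thesis
    by simp
qed

lemma prob_sum_pos_le:
  fixes W :: "'i \<Rightarrow> 'a \<Rightarrow> real" and c :: "'i \<Rightarrow> real"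
  assumes "finite I" "indep_vars (\<lambda>_. borel) W I"
    and bounded: "\<And>i \<omega>. i \<in> I \<Longrightarrow> \<omega> \<in> space M \<Longrightarrow> W i \<omega> \<le> b"
    and "0 \<le> \<rho>" "\<rho> \<le> 1"
    and cases: "\<And>i. i \<in> I \<Longrightarrow>
      (\<forall>\<omega>\<in>space M. W i \<omega> \<le> 0) \<or> (0 < c i \<and> expectation (\<lambda>\<omega>. exp (c i * W i \<omega>)) \<le> \<rho>)"
  shows "prob {\<omega>\<in>space M. 0 < (\<Sum>i\<in>I. W i \<omega>)} \<le> \<rho>"
proof -
  define S where "S = {i\<in>I. 0 < c i \<and> expectation (\<lambda>\<omega>. exp (c i * W i \<omega>)) \<le> \<rho>}"
  have W: "W i \<in> borel_measurable M" if "i \<in> I" for i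
    using assms(2) that by (simp add: indep_vars_def)
  show ?thesis
  proof (cases "S = {}")
    case True
    then have "\<forall>i\<in>I. \<forall>\<omega>\<in>space M. W i \<omega> \<le> 0"
      using cases unfolding S_def by blast
    then have empty: "{\<omega>\<in>space M. 0 < (\<Sum>i\<in>I. W i \<omega>)} = {}"
      by (auto simp: not_less intro: sum_nonpos)
    show ?thesis
      unfolding empty using assms(4) by simp
  next
    case False
    obtain j where "is_arg_min c (\<lambda>i. i \<in> S) j"
      using ex_is_arg_min_if_finite[OF _ False] assms(1) by (auto simp: S_def)
    then have j: "j \<in> S" "\<And>i. i \<in> S \<Longrightarrow> c j \<le> c i"
      by (auto simp: is_arg_min_def not_less)
    then have "0 < c j" "j \<in> I" "expectation (\<lambda>\<omega>. exp (c j * W j \<omega>)) \<le> \<rho>"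
      by (simp_all add: S_def)
    have "expectation (\<lambda>\<omega>. exp (c j * W i \<omega>)) \<le> 1" if "i \<in> I" for i
    proof (cases "i \<in> S")
      case True
      then have "c j \<le> c i" "expectation (\<lambda>\<omega>. exp (c i * W i \<omega>)) \<le> \<rho>"
        using j(2) by (simp_all add: S_def)
      then show ?thesis
        using expectation_exp_le_1_of_larger_exponent[OF W[OF that] bounded[OF that], of "c j" "c i"]
          \<open>0 < c j\<close> assms(5) by simp
    next
      case False
      then show ?thesis
        using cases[OF that] that W[OF that] \<open>0 < c j\<close>
        by (intro expectation_exp_le_1_of_nonpos) (auto simp: S_def)
    qed
    then show ?thesis
      using assms(1-3) \<open>0 < c j\<close> \<open>j \<in> I\<close> \<open>expectation (\<lambda>\<omega>. exp (c j * W j \<omega>)) \<le> \<rho>\<close>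
      by (intro prob_sum_pos_le_exp_moment[where c = "c j" and j = j]) auto
  qed
qed

lemma indep_vars_row:
  fixes X :: "'i \<Rightarrow> 'j \<Rightarrow> 'a \<Rightarrow> 'b"
  assumes "indep_vars (\<lambda>_. N) (\<lambda>(i, s). X i s) (I \<times> J)" "i \<in> I"
  shows "indep_vars (\<lambda>_. N) (X i) J"
proof -
  have "indep_vars (\<lambda>s. PiM {(i, s)} (\<lambda>_. N)) (\<lambda>s \<omega>. restrict (\<lambda>p. case_prod X p \<omega>) {(i, s)}) J"
    using assms by (intro indep_vars_restrict) (auto simp: disjoint_family_on_def)
  then have "indep_vars (\<lambda>_. N) (\<lambda>s \<omega>. restrict (\<lambda>p. case_prod X p \<omega>) {(i, s)} (i, s)) J"
    by (rule indep_vars_compose2) (rule measurable_component_singleton, simp)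
  then show ?thesis
    by simp
qed

end

section \<open>The stopping time\<close>

(* Since xi t \<ge> ln t / 2, the stopping rule has fired by time tau_cap C at the latest. *)
definition tau_cap :: "real \<Rightarrow> nat" where
  "tau_cap C = nat \<lceil>exp (2 * C)\<rceil> + 1"

lemma tau_cap_pos: "0 < tau_cap C"
  by (simp add: tau_cap_def)

lemma less_half_ln_tau_cap: "C < 0.5 * ln (real (tau_cap C))"
proof -
  have "exp (2 * C) < real (tau_cap C)"
    unfolding tau_cap_def by linarith
  then have "ln (exp (2 * C)) < ln (real (tau_cap C))"
    using tau_cap_pos by (intro ln_less_cancel_iff[THEN iffD2]) auto
  then show ?thesis
    by simp
qed

lemma tau_cap_le: "real (tau_cap C) \<le> exp (2 * C) + 2"
proof -
  have "real (tau_cap C) = of_int \<lceil>exp (2 * C)\<rceil> + 1"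
    by (simp add: tau_cap_def)
  then show ?thesis
    using of_int_ceiling_le_add_one[of "exp (2 * C)"] by linarith
qed

lemma less_xi_tau_cap:
  assumes "0 \<le> al"
  shows "C < xi Y th al (tau_cap C) \<omega>"
proof -
  have "0 \<le> al * real (tau_cap C) * (hatDelta Y th (tau_cap C) \<omega>)\<^sup>2"
    using assms by simp
  then show ?thesis
    using less_half_ln_tau_cap[of C] unfolding xi_def by linarith
qed

lemma tau_le_tau_cap:
  assumes "0 \<le> al"
  shows "tau Y th al C \<omega> \<le> tau_cap C"
  unfolding tau_def using tau_cap_pos less_xi_tau_cap[OF assms] by (intro Least_le) simp

lemma tau_spec:
  assumes "0 \<le> al"
  shows "0 < tau Y th al C \<omega>" "C < xi Y th al (tau Y th al C \<omega>) \<omega>"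
proof -
  have "0 < tau_cap C \<and> C < xi Y th al (tau_cap C) \<omega>"
    using tau_cap_pos less_xi_tau_cap[OF assms] by simp
  then have "0 < tau Y th al C \<omega> \<and> C < xi Y th al (tau Y th al C \<omega>) \<omega>"
    unfolding tau_def by (rule LeastI)
  then show "0 < tau Y th al C \<omega>" "C < xi Y th al (tau Y th al C \<omega>) \<omega>"
    by auto
qed

lemma less_tau_iff:
  assumes "0 \<le> al"
  shows "n < tau Y th al C \<omega> \<longleftrightarrow> (\<forall>t\<in>{1..n}. xi Y th al t \<omega> \<le> C)"
proof (intro iffI ballI)
  fix t assume "n < tau Y th al C \<omega>" and t: "t \<in> {1..n}"
  then have "t < tau Y th al C \<omega>"
    by simp
  then have "\<not> (0 < t \<and> C < xi Y th al t \<omega>)"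
    unfolding tau_def by (rule not_less_Least)
  then show "xi Y th al t \<omega> \<le> C"
    using t by auto
next
  assume below: "\<forall>t\<in>{1..n}. xi Y th al t \<omega> \<le> C"
  show "n < tau Y th al C \<omega>"
  proof (rule ccontr)
    assume "\<not> n < tau Y th al C \<omega>"
    then have "tau Y th al C \<omega> \<in> {1..n}"
      using tau_spec(1)[OF assms] by (simp add: Suc_le_eq)
    then have "xi Y th al (tau Y th al C \<omega>) \<omega> \<le> C"
      using below by blast
    then show False
      using tau_spec(2)[OF assms, of C Y th \<omega>] by simp
  qed
qed

lemma hatDelta_le_of_less_tau:
  fixes n :: nat and D :: real
  assumes "0 < al" "0 < D" "1 / D\<^sup>2 \<le> n" "16 * (C - ln (1 / D)) \<le> al * D\<^sup>2 * n"
    and "n < tau Y th al C \<omega>"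
  shows "hatDelta Y th n \<omega> \<le> D / 4"
proof -
  let ?h = "hatDelta Y th n \<omega>"
  have "0 < 1 / D\<^sup>2"
    using assms(2) by simp
  then have "0 < real n"
    using assms(3) by linarith
  have "2 * ln (1 / D) \<le> ln n"
    using assms(2,3) \<open>0 < real n\<close> by (simp add: ln_ge_iff exp_two_ln_inverse)
  have "\<forall>t\<in>{1..n}. xi Y th al t \<omega> \<le> C"
    using iffD1[OF less_tau_iff[OF less_imp_le[OF assms(1)]] assms(5)] .
  then have "al * n * ?h\<^sup>2 + 0.5 * ln n \<le> C"
    using \<open>0 < real n\<close> unfolding xi_def by simp
  then have "al * n * ?h\<^sup>2 \<le> C - ln (1 / D)"
    using \<open>2 * ln (1 / D) \<le> ln n\<close> by linarith
  also have "\<dots> \<le> al * n * (D / 4)\<^sup>2"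
    using assms(4) by (simp add: power_divide algebra_simps)
  finally have "?h\<^sup>2 \<le> (D / 4)\<^sup>2"
    using assms(1) \<open>0 < real n\<close> by simp
  then show ?thesis
    using assms(2) by (simp add: power2_le_iff_abs_le hatDelta_def)
qed

lemma tau_cong:
  assumes "\<And>s. 1 \<le> s \<Longrightarrow> Y s \<omega> = Y' s \<omega>'"
  shows "tau Y th al C \<omega> = tau Y' th al C \<omega>'"
proof -
  have "(\<Sum>s=1..t. Y s \<omega>) = (\<Sum>s=1..t. Y' s \<omega>')" for t
    using assms by (intro sum.cong) auto
  then have "xi Y th al t \<omega> = xi Y' th al t \<omega>'" for t
    unfolding xi_def hatDelta_def by simp
  then show ?thesis
    unfolding tau_def by simp
qed

lemma xi_measurable:
  assumes "\<And>s. 1 \<le> s \<Longrightarrow> Y s \<in> borel_measurable N"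
  shows "(\<lambda>\<omega>. xi Y th al t \<omega>) \<in> borel_measurable N"
proof -
  have [measurable]: "(\<lambda>\<omega>. \<Sum>s=1..t. Y s \<omega>) \<in> borel_measurable N"
    using assms by (intro borel_measurable_sum) auto
  show ?thesis
    unfolding xi_def hatDelta_def by measurable
qed

lemma tau_measurable:
  assumes "\<And>s. 1 \<le> s \<Longrightarrow> Y s \<in> borel_measurable N"
  shows "tau Y th al C \<in> measurable N (count_space UNIV)"
proof -
  note xi_measurable[OF assms, measurable]
  have "Measurable.pred N (\<lambda>\<omega>. 0 < t \<and> C < xi Y th al t \<omega>)" for t
    by measurable
  then show ?thesis
    unfolding tau_def[abs_def] by (intro measurable_Least) (simp add: pred_def)
qed

lemma (in prob_space) indep_vars_tau:
  fixes X :: "'i \<Rightarrow> nat \<Rightarrow> 'a \<Rightarrow> real"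
  assumes "indep_vars (\<lambda>_. borel) (\<lambda>(i, s). X i s) (I \<times> {1..})"
  shows "indep_vars (\<lambda>_. count_space UNIV) (\<lambda>i. tau (X i) th al C) I"
proof -
  define B where "B i = {i} \<times> {1::nat..}" for i :: 'i
  let ?sample = "\<lambda>i \<omega>. restrict (\<lambda>p. case_prod X p \<omega>) (B i)"
  have "indep_vars (\<lambda>i. PiM (B i) (\<lambda>_. borel)) ?sample I"
    using assms by (intro indep_vars_restrict) (auto simp: B_def disjoint_family_on_def)
  moreover have "tau (\<lambda>s f. f (i, s)) th al C \<in> measurable (PiM (B i) (\<lambda>_. borel)) (count_space UNIV)" for i
    by (intro tau_measurable measurable_component_singleton) (simp add: B_def)
  ultimately have "indep_vars (\<lambda>_. count_space UNIV)
      (\<lambda>i \<omega>. tau (\<lambda>s f. f (i, s)) th al C (?sample i \<omega>)) I"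
    by (rule indep_vars_compose2)
  moreover have "tau (\<lambda>s f. f (i, s)) th al C (?sample i \<omega>) = tau (X i) th al C \<omega>" for i \<omega>
    by (rule tau_cong) (simp add: B_def)
  ultimately show ?thesis
    by simp
qed

section \<open>The function g and the threshold Lambda\<close>

lemma gfun_exp:
  "D = 0 \<or> x \<le> ln (1 / D) \<Longrightarrow> gfun al D x = exp (2 * x)"
  unfolding gfun_def by simp

(* In this form the linear branch visibly continues exp (2 x) at x = ln (1 / D). *)
lemma gfun_linear:
  assumes "0 < al" "0 < D" "ln (1 / D) < x"
  shows "gfun al D x = exp (2 * ln (1 / D)) * (1 + (x - ln (1 / D)) / al)"
  using assms by (simp add: gfun_def exp_two_ln_inverse field_simps)

lemma gfun_zero:
  "0 \<le> D \<Longrightarrow> D \<le> 1 \<Longrightarrow> gfun al D 0 = 1"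
  by (cases "D = 0") (auto simp: gfun_def)

lemma strict_mono_gfun:
  assumes "0 < al" "0 \<le> D"
  shows "strict_mono (gfun al D)"
proof (rule strict_monoI)
  fix x y :: real
  assume "x < y"
  let ?L = "ln (1 / D)"
  consider "D = 0 \<or> y \<le> ?L" | "0 < D" "x \<le> ?L" "?L < y" | "0 < D" "?L < x"
    using \<open>x < y\<close> assms(2) by fastforce
  then show "gfun al D x < gfun al D y"
  proof cases
    case 1
    then show ?thesis
      using \<open>x < y\<close> by (auto simp: gfun_exp)
  next
    case 2
    have "gfun al D x \<le> exp (2 * ?L)"
      using 2 by (simp add: gfun_exp)
    also have "\<dots> < exp (2 * ?L) * (1 + (y - ?L) / al)"
      using 2 assms(1) by simp
    finally show ?thesis
      using 2 assms(1) by (simp add: gfun_linear)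
  next
    case 3
    then show ?thesis
      using \<open>x < y\<close> assms(1) by (simp add: gfun_linear divide_strict_right_mono)
  qed
qed

lemma continuous_on_gfun:
  assumes "0 < al" "0 \<le> D"
  shows "continuous_on A (gfun al D)"
proof (cases "D = 0")
  case True
  then show ?thesis
    by (simp add: gfun_def continuous_intros)
next
  case False
  let ?L = "ln (1 / D)"
  have D: "0 < D"
    using False assms(2) by simp
  have "gfun al D x = (if x \<le> ?L then exp (2 * x) else exp (2 * ?L) * (1 + (x - ?L) / al))" for x
    by (cases "x \<le> ?L") (simp_all add: gfun_exp gfun_linear[OF assms(1) D])
  then have "gfun al D = (\<lambda>x. if x \<le> ?L then exp (2 * x) else exp (2 * ?L) * (1 + (x - ?L) / al))"
    by (simp add: fun_eq_iff)
  moreover have "continuous_on ({..?L} \<union> {?L..})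
      (\<lambda>x. if x \<le> ?L then exp (2 * x) else exp (2 * ?L) * (1 + (x - ?L) / al))"
  proof (rule continuous_on_If)
    show "continuous_on {..?L} (\<lambda>x. exp (2 * x))"
      by (intro continuous_intros)
    show "continuous_on {?L..} (\<lambda>x. exp (2 * ?L) * (1 + (x - ?L) / al))"
      using assms(1) by (intro continuous_intros) simp
  qed auto
  moreover have "A \<subseteq> {..?L} \<union> {?L..}"
    by auto
  ultimately show ?thesis
    by (simp add: continuous_on_subset)
qed

lemma one_le_gfun:
  assumes "0 < al" "0 \<le> D" "D \<le> 1" "0 \<le> x"
  shows "1 \<le> gfun al D x"
proof -
  have "gfun al D 0 \<le> gfun al D x"
    using strict_mono_gfun[OF assms(1,2)] assms(4) by (simp add: strict_mono_less_eq)
  then show ?thesis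
    using gfun_zero[OF assms(2,3)] by simp
qed

lemma gfun_ge_linear:
  assumes "0 < al" "al \<le> 8" "0 \<le> D" "D \<le> 1" "0 \<le> x"
  shows "1 + x / 8 \<le> gfun al D x"
proof (cases "D = 0 \<or> x \<le> ln (1 / D)")
  case True
  have "1 + x / 8 \<le> exp (2 * x)"
    using exp_ge_add_one_self[of "2 * x"] assms(5) by linarith
  then show ?thesis
    using True by (simp add: gfun_exp)
next
  case False
  let ?L = "ln (1 / D)"
  have D: "0 < D" and x: "?L < x"
    using False assms(3) by auto
  have L: "0 \<le> ?L"
    using D assms(4) by simp
  have "(x - ?L) / 8 \<le> (x - ?L) / al"
    using x assms(1,2) by (intro divide_left_mono) auto
  moreover have "1 + 2 * ?L \<le> exp (2 * ?L)"
    by (rule exp_ge_add_one_self)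
  ultimately have "(1 + 2 * ?L) * (1 + (x - ?L) / 8) \<le> exp (2 * ?L) * (1 + (x - ?L) / al)"
    using x L by (intro mult_mono) auto
  moreover have "(1 + 2 * ?L) * (1 + (x - ?L) / 8) = 1 + x / 8 + 15 / 8 * ?L + ?L * (x - ?L) / 4"
    by (simp add: field_simps)
  moreover have "0 \<le> ?L * (x - ?L)"
    using x L by simp
  ultimately have "1 + x / 8 \<le> exp (2 * ?L) * (1 + (x - ?L) / al)"
    using L by linarith
  then show ?thesis
    using assms(1) D x by (simp add: gfun_linear)
qed

lemma exp_le_gfun:
  assumes "0 < al" "0 \<le> D" "C \<le> x" "D = 0 \<or> C \<le> ln (1 / D)"
  shows "exp (2 * C) \<le> gfun al D x"
proof (cases "D = 0 \<or> x \<le> ln (1 / D)")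
  case True
  then show ?thesis
    using assms(3) by (simp add: gfun_exp)
next
  case False
  let ?L = "ln (1 / D)"
  have "exp (2 * C) \<le> exp (2 * ?L)"
    using False assms(4) by simp
  also have "\<dots> \<le> exp (2 * ?L) * (1 + (x - ?L) / al)"
    using False assms(1) by simp
  finally show ?thesis
    using False assms(1,2) by (simp add: gfun_linear)
qed

lemma Lambda_spec:
  assumes "0 < al" "al \<le> 8" "0 < K" "\<And>i. i < K \<Longrightarrow> \<bar>mu i - th\<bar> \<le> 1"
    and "real K \<le> T / Mconst al"
  shows "0 \<le> Lambda al th mu K T"
    and "(\<Sum>i<K. gfun al \<bar>mu i - th\<bar> (Lambda al th mu K T)) = T / Mconst al"
proof -
  define c where "c = T / Mconst al"
  define G where "G x = (\<Sum>i<K. gfun al \<bar>mu i - th\<bar> x)" for x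
  have "strict_mono G"
  proof (rule strict_monoI)
    fix x y :: real
    assume "x < y"
    then show "G x < G y"
      unfolding G_def using assms(1,3) strict_mono_gfun
      by (intro sum_strict_mono strict_monoD[of "gfun al _"]) auto
  qed
  have "G 0 = K"
    using assms(4) by (simp add: G_def gfun_zero)
  have "0 \<le> c"
    using assms(5) by (simp add: c_def)
  have "1 + 8 * c / 8 \<le> gfun al \<bar>mu 0 - th\<bar> (8 * c)"
    using assms \<open>0 \<le> c\<close> by (intro gfun_ge_linear) auto
  also have "\<dots> \<le> G (8 * c)"
    unfolding G_def using assms(1,3,4) \<open>0 \<le> c\<close>
    by (intro member_le_sum order_trans[OF zero_le_one one_le_gfun]) auto
  finally have "c \<le> G (8 * c)"
    by simp
  moreover have "continuous_on {0..8 * c} G"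
    unfolding G_def using assms(1) by (intro continuous_on_sum continuous_on_gfun) auto
  moreover have "G 0 \<le> c"
    using \<open>G 0 = K\<close> assms(5) by (simp add: c_def)
  ultimately obtain x where x: "0 \<le> x" "G x = c"
    using IVT'[of G 0 c "8 * c"] \<open>0 \<le> c\<close> by auto
  have "\<exists>!x. 0 \<le> x \<and> G x = c"
    using x strict_mono_eq[OF \<open>strict_mono G\<close>] by (intro ex1I[of _ x]) auto
  then have "0 \<le> Lambda al th mu K T \<and> G (Lambda al th mu K T) = c"
    unfolding Lambda_def G_def c_def by (rule theI')
  then show "0 \<le> Lambda al th mu K T"
    and "(\<Sum>i<K. gfun al \<bar>mu i - th\<bar> (Lambda al th mu K T)) = T / Mconst al"
    by (simp_all add: G_def c_def)
qed

lemma tau_le_budget: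
  assumes "0 < al" "0 \<le> D" "D \<le> 1" "0 \<le> x" "C \<le> x" "D = 0 \<or> C \<le> ln (1 / D)" "3 \<le> Mc"
  shows "real (tau Y th al C \<omega>) \<le> Mc * gfun al D x"
proof -
  have "1 \<le> gfun al D x"
    using assms(1-4) by (rule one_le_gfun)
  have "real (tau Y th al C \<omega>) \<le> real (tau_cap C)"
    using assms(1) by (simp add: tau_le_tau_cap)
  also have "\<dots> \<le> exp (2 * C) + 2"
    by (rule tau_cap_le)
  also have "\<dots> \<le> 3 * gfun al D x"
    using exp_le_gfun[OF assms(1,2,5,6)] \<open>1 \<le> gfun al D x\<close> by linarith
  also have "\<dots> \<le> Mc * gfun al D x"
    using assms(7) \<open>1 \<le> gfun al D x\<close> by (intro mult_right_mono) auto
  finally show ?thesis .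
qed

section \<open>A single arm\<close>

locale bandit_arm = prob_space +
  fixes Y :: "nat \<Rightarrow> 'a \<Rightarrow> real" and mu :: real
  assumes indep_samples: "indep_vars (\<lambda>_. borel) Y {1..}"
    and samples_in_unit: "\<And>s \<omega>. 1 \<le> s \<Longrightarrow> \<omega> \<in> space M \<Longrightarrow> Y s \<omega> \<in> {0..1}"
    and distr_samples: "\<And>s. 1 \<le> s \<Longrightarrow> distr M borel (Y s) = distr M borel (Y 1)"
    and expectation_sample: "expectation (Y 1) = mu"
begin

lemma measurable_sample: "1 \<le> s \<Longrightarrow> Y s \<in> borel_measurable M"
  using indep_samples by (simp add: indep_vars_def)

lemma mean_in_unit: "mu \<in> {0..1}"
proof -
  have "expectation (Y 1) \<le> expectation (\<lambda>_. 1)"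
    using samples_in_unit measurable_sample
    by (intro integral_mono integrable_const_bound[where B = 1]) auto
  moreover have "0 \<le> expectation (Y 1)"
    using samples_in_unit by (intro Bochner_Integration.integral_nonneg) auto
  ultimately show ?thesis
    unfolding expectation_sample[symmetric] by (simp add: prob_space)
qed

lemma prob_sample_mean_deviation:
  fixes n :: nat and \<epsilon> :: real
  assumes "1 \<le> n" "0 \<le> \<epsilon>"
  shows "prob {\<omega>\<in>space M. \<epsilon> \<le> \<bar>(\<Sum>s=1..n. Y s \<omega>) / n - mu\<bar>} \<le> 2 * exp (- 2 * n * \<epsilon>\<^sup>2)"
proof -
  interpret Hoeffding_ineq_iid M "{1..n}" Y "Y 1" 0 1 "expectation (Y 1)"
  proof unfold_locales
    show "indep_vars (\<lambda>_. borel) Y {1..n}"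
      using indep_samples by (rule indep_vars_subset) auto
    show "AE \<omega> in M. Y 1 \<omega> \<in> {0..1}"
      using samples_in_unit by (intro AE_I2) simp
    show "random_variable borel (Y 1)"
      by (rule measurable_sample) simp
    show "finite {1..n}"
      by simp
    show "distr M borel (Y s) = distr M borel (Y 1)" if "s \<in> {1..n}" for s
      using that by (intro distr_samples) simp
  qed (rule Pure.reflexive)
  have "{1..n} \<noteq> {}"
    using assms(1) by simp
  from Hoeffding_ineq_abs_ge'[OF assms(2) zero_less_one this] show ?thesis
    unfolding expectation_sample by simp
qed

lemma prob_less_tau_le:
  fixes n :: nat
  assumes "0 < al" "D = \<bar>mu - th\<bar>" "0 < D" "1 / D\<^sup>2 \<le> n"
    and "16 * (C - ln (1 / D)) \<le> al * D\<^sup>2 * n"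
  shows "prob {\<omega>\<in>space M. n < tau Y th al C \<omega>} \<le> 2 * exp (- 9 / 8 * D\<^sup>2 * n)"
proof -
  let ?mean = "\<lambda>\<omega>. (\<Sum>s=1..n. Y s \<omega>) / n"
  have "0 < 1 / D\<^sup>2"
    using assms(3) by simp
  then have "0 < real n"
    using assms(4) by linarith
  then have "1 \<le> n"
    by simp
  have "3 * D / 4 \<le> \<bar>?mean \<omega> - mu\<bar>" if "n < tau Y th al C \<omega>" for \<omega>
    using hatDelta_le_of_less_tau[OF assms(1,3-5) that] assms(2) unfolding hatDelta_def by linarith
  moreover have [measurable]: "(\<lambda>\<omega>. \<Sum>s=1..n. Y s \<omega>) \<in> borel_measurable M"
    using measurable_sample by (intro borel_measurable_sum) auto
  ultimately have "prob {\<omega>\<in>space M. n < tau Y th al C \<omega>}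
      \<le> prob {\<omega>\<in>space M. 3 * D / 4 \<le> \<bar>?mean \<omega> - mu\<bar>}"
    by (intro finite_measure_mono) auto
  also have "\<dots> \<le> 2 * exp (- 2 * n * (3 * D / 4)\<^sup>2)"
    using \<open>1 \<le> n\<close> assms(3) by (intro prob_sample_mean_deviation) auto
  finally show ?thesis
    by (simp add: power2_eq_square algebra_simps)
qed

lemma prob_less_tau_le_exp:
  fixes n :: nat
  assumes "0 < al" "D = \<bar>mu - th\<bar>" "0 < D" "ln (1 / D) \<le> C"
  shows "prob {\<omega>\<in>space M. n < tau Y th al C \<omega>}
    \<le> 2 * exp (9 / 8 + 18 * (C - ln (1 / D)) / al) * exp (- 9 / 8 * D\<^sup>2 * n)"
proof (cases "1 + 16 * (C - ln (1 / D)) / al \<le> D\<^sup>2 * n")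
  case True
  have "0 \<le> 16 * (C - ln (1 / D)) / al"
    using assms(1,4) by simp
  then have "1 \<le> D\<^sup>2 * n" "16 * (C - ln (1 / D)) / al \<le> D\<^sup>2 * n"
    using True by linarith+
  then have n: "1 / D\<^sup>2 \<le> n" "16 * (C - ln (1 / D)) \<le> al * D\<^sup>2 * n"
    using assms(1,3) by (simp_all add: pos_divide_le_eq algebra_simps)
  have "prob {\<omega>\<in>space M. n < tau Y th al C \<omega>} \<le> 2 * exp (- 9 / 8 * D\<^sup>2 * n)"
    by (rule prob_less_tau_le[OF assms(1-3) n])
  also have "\<dots> \<le> 2 * exp (9 / 8 + 18 * (C - ln (1 / D)) / al) * exp (- 9 / 8 * D\<^sup>2 * n)"
    using assms(1,4) by simp
  finally show ?thesis .
next
  case False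
  then have "0 \<le> 9 / 8 + 18 * (C - ln (1 / D)) / al - 9 / 8 * D\<^sup>2 * n"
    using assms(1) by (simp add: field_simps)
  then have "1 \<le> exp (9 / 8 + 18 * (C - ln (1 / D)) / al + - 9 / 8 * D\<^sup>2 * n)"
    by simp
  then have "1 \<le> 2 * exp (9 / 8 + 18 * (C - ln (1 / D)) / al) * exp (- 9 / 8 * D\<^sup>2 * n)"
    unfolding exp_add by linarith
  then show ?thesis
    using measure_le_1 order_trans by blast
qed

lemma expectation_exp_tau_le:
  assumes "0 < al" "D = \<bar>mu - th\<bar>" "0 < D" "D \<le> 1" "ln (1 / D) \<le> C"
  shows "expectation (\<lambda>\<omega>. exp (D\<^sup>2 * tau Y th al C \<omega>)) \<le> exp (8 + 18 * (C - ln (1 / D)) / al)"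
proof -
  define Z where "Z = 9 / 8 + 18 * (C - ln (1 / D)) / al"
  have "0 < D\<^sup>2" "D\<^sup>2 \<le> 1"
    using assms(3,4) by (auto simp: power_le_one)
  then have "exp (D\<^sup>2) - 1 \<le> 2 * D\<^sup>2" "exp (D\<^sup>2) \<le> 3"
    using exp_le_one_plus_twice[of "D\<^sup>2"] by simp_all
  have "35 \<le> exp (6 :: real)"
  proof -
    have "(2 :: real) ^ 6 \<le> exp 1 ^ 6"
      using exp_ge_add_one_self[of 1] by (intro power_mono) auto
    then show ?thesis
      using exp_of_nat_mult[of 6 "1 :: real"] by simp
  qed
  have "1 \<le> exp Z"
    using assms(1,5) by (simp add: Z_def)
  have "expectation (\<lambda>\<omega>. exp (D\<^sup>2 * tau Y th al C \<omega>))
      \<le> exp (D\<^sup>2) + 2 * exp Z * (exp (D\<^sup>2) - 1) / (9 / 8 * D\<^sup>2 - D\<^sup>2)"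
  proof (rule expectation_exp_le_of_tail)
    show "tau Y th al C \<in> measurable M (count_space UNIV)"
      using measurable_sample by (rule tau_measurable)
    show "1 \<le> tau Y th al C \<omega> \<and> tau Y th al C \<omega> \<le> tau_cap C" for \<omega>
      using tau_spec(1)[OF less_imp_le[OF assms(1)], where Y = Y and th = th and C = C and \<omega> = \<omega>]
        tau_le_tau_cap[OF less_imp_le[OF assms(1)], where Y = Y and th = th and C = C and \<omega> = \<omega>]
      by (simp add: Suc_le_eq)
    show "prob {\<omega>\<in>space M. n < tau Y th al C \<omega>} \<le> 2 * exp Z * exp (- (9 / 8 * D\<^sup>2) * n)" for n
      using prob_less_tau_le_exp[OF assms(1-3,5)] by (simp add: Z_def)
  qed (use \<open>0 < D\<^sup>2\<close> in auto)
  also have "\<dots> = exp (D\<^sup>2) + 16 * ((exp (D\<^sup>2) - 1) / D\<^sup>2) * exp Z"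
    using \<open>0 < D\<^sup>2\<close> by (simp add: field_simps)
  also have "\<dots> \<le> 3 + 16 * 2 * exp Z"
    using \<open>exp (D\<^sup>2) \<le> 3\<close> \<open>exp (D\<^sup>2) - 1 \<le> 2 * D\<^sup>2\<close> \<open>0 < D\<^sup>2\<close>
    by (intro add_mono mult_right_mono mult_left_mono) (auto simp: pos_divide_le_eq)
  also have "\<dots> \<le> exp 6 * exp Z"
    using \<open>1 \<le> exp Z\<close> mult_right_mono[OF \<open>35 \<le> exp 6\<close>, of "exp Z"] by linarith
  also have "\<dots> \<le> exp (8 + 18 * (C - ln (1 / D)) / al)"
    by (simp add: Z_def flip: exp_add)
  finally show ?thesis .
qed

lemma expectation_exp_tau_budget_le:
  assumes "0 < al" "D = \<bar>mu - th\<bar>" "0 < D" "D \<le> 1" "0 \<le> k" "ln (1 / D) + k < x" "40 \<le> Mc"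
  shows "expectation (\<lambda>\<omega>. exp (D\<^sup>2 * (tau Y th al (x - k) \<omega> - Mc * gfun al D x)))
    \<le> exp (- 40 * k / al)"
proof -
  let ?L = "ln (1 / D)"
  let ?B = "Mc * gfun al D x"
  define y where "y = (x - ?L) / al"
  define \<kappa> where "\<kappa> = k / al"
  have "D\<^sup>2 * ?B = Mc * (1 + y)"
    using assms(1,3,5,6) by (simp add: gfun_linear exp_two_ln_inverse y_def)
  have "\<kappa> \<le> y" "0 \<le> \<kappa>"
    using assms(1,5,6) by (auto simp: y_def \<kappa>_def divide_right_mono)
  then have "40 * (1 + y) \<le> Mc * (1 + y)"
    using assms(7) by (intro mult_right_mono) auto
  have "18 * (x - k - ?L) / al = 18 * y - 18 * \<kappa>" "- 40 * k / al = - 40 * \<kappa>"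
    using assms(1) by (simp_all add: y_def \<kappa>_def field_simps)
  have "expectation (\<lambda>\<omega>. exp (D\<^sup>2 * (tau Y th al (x - k) \<omega> - ?B)))
      = expectation (\<lambda>\<omega>. exp (- (D\<^sup>2 * ?B)) * exp (D\<^sup>2 * tau Y th al (x - k) \<omega>))"
    by (simp add: right_diff_distrib exp_diff exp_minus field_simps)
  also have "\<dots> = exp (- (D\<^sup>2 * ?B)) * expectation (\<lambda>\<omega>. exp (D\<^sup>2 * tau Y th al (x - k) \<omega>))"
    by (rule integral_mult_right_zero)
  also have "\<dots> \<le> exp (- (D\<^sup>2 * ?B)) * exp (8 + 18 * (x - k - ?L) / al)"
    using assms(1-6) by (intro mult_left_mono expectation_exp_tau_le) auto
  also have "\<dots> = exp (8 + 18 * y - 18 * \<kappa> - Mc * (1 + y))"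
    unfolding \<open>D\<^sup>2 * ?B = Mc * (1 + y)\<close> \<open>18 * (x - k - ?L) / al = 18 * y - 18 * \<kappa>\<close>
    by (simp flip: exp_add)
  also have "\<dots> \<le> exp (- 40 * k / al)"
    unfolding \<open>- 40 * k / al = - 40 * \<kappa>\<close>
    using \<open>40 * (1 + y) \<le> Mc * (1 + y)\<close> \<open>\<kappa> \<le> y\<close> \<open>0 \<le> \<kappa>\<close> by simp
  finally show ?thesis .
qed

lemma tau_within_budget_or_exp_moment_le:
  assumes "0 < al" "0 \<le> th" "th \<le> 1" "0 \<le> k" "k \<le> x" "40 \<le> Mc"
  defines "D \<equiv> \<bar>mu - th\<bar>"
  shows "(\<forall>\<omega>\<in>space M. tau Y th al (x - k) \<omega> - Mc * gfun al D x \<le> 0)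
    \<or> (0 < D\<^sup>2 \<and> expectation (\<lambda>\<omega>. exp (D\<^sup>2 * (tau Y th al (x - k) \<omega> - Mc * gfun al D x)))
          \<le> exp (- 40 * k / al))"
proof -
  have "0 \<le> D" "D \<le> 1"
    using mean_in_unit assms(2,3) by (auto simp: D_def)
  show ?thesis
  proof (cases "D = 0 \<or> x - k \<le> ln (1 / D)")
    case True
    then show ?thesis
      using tau_le_budget[of al D x "x - k" Mc Y th] assms \<open>0 \<le> D\<close> \<open>D \<le> 1\<close> by auto
  next
    case False
    then show ?thesis
      using expectation_exp_tau_budget_le[of al D th k x Mc] assms \<open>D \<le> 1\<close> by (auto simp: D_def)
  qed
qed

end

lemma (in prob_space) bandit_arm_of_row:
  fixes X :: "'i \<Rightarrow> nat \<Rightarrow> 'a \<Rightarrow> real"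
  assumes "indep_vars (\<lambda>_. borel) (\<lambda>(i, s). X i s) (I \<times> {1..})" "i \<in> I"
    and "\<And>s \<omega>. 1 \<le> s \<Longrightarrow> \<omega> \<in> space M \<Longrightarrow> X i s \<omega> \<in> {0..1}"
    and "\<And>s. 1 \<le> s \<Longrightarrow> distr M borel (X i s) = distr M borel (X i 1)"
    and "expectation (X i 1) = mu"
  shows "bandit_arm M (X i) mu"
proof unfold_locales
  show "indep_vars (\<lambda>_. borel) (X i) {1..}"
    using assms(1,2) by (rule indep_vars_row)
qed (use assms(3-5) in blast)+

section \<open>The total sampling time\<close>

lemma (in prob_space) prob_total_tau_le_budget:
  fixes X :: "'i \<Rightarrow> nat \<Rightarrow> 'a \<Rightarrow> real"
  assumes "finite I" "indep_vars (\<lambda>_. borel) (\<lambda>(i, s). X i s) (I \<times> {1..})"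
    and arms: "\<And>i. i \<in> I \<Longrightarrow> bandit_arm M (X i) (mu i)"
    and "0 < al" "0 \<le> th" "th \<le> 1" "0 \<le> k" "k \<le> x" "40 \<le> Mc"
  shows "1 - exp (- 40 * k / al) \<le> prob {\<omega>\<in>space M.
    real (\<Sum>i\<in>I. tau (X i) th al (x - k) \<omega>) \<le> (\<Sum>i\<in>I. Mc * gfun al \<bar>mu i - th\<bar> x)}"
proof -
  define B where "B i = Mc * gfun al \<bar>mu i - th\<bar> x" for i
  define W where "W i \<omega> = real (tau (X i) th al (x - k) \<omega>) - B i" for i \<omega>
  have indep: "indep_vars (\<lambda>_. borel) W I"
    using indep_vars_tau[OF assms(2)] unfolding W_def by (rule indep_vars_compose2) simp
  have "prob {\<omega>\<in>space M. 0 < (\<Sum>i\<in>I. W i \<omega>)} \<le> exp (- 40 * k / al)"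
  proof (rule prob_sum_pos_le[OF assms(1) indep])
    show "W i \<omega> \<le> tau_cap (x - k)" if "i \<in> I" for i \<omega>
    proof -
      have "\<bar>mu i - th\<bar> \<le> 1"
        using bandit_arm.mean_in_unit[OF arms[OF that]] assms(5,6) by auto
      then have "0 \<le> B i"
        using assms(4,7-9) one_le_gfun[of al "\<bar>mu i - th\<bar>" x] by (simp add: B_def)
      moreover have "tau (X i) th al (x - k) \<omega> \<le> tau_cap (x - k)"
        using assms(4) by (simp add: tau_le_tau_cap)
      ultimately show ?thesis
        unfolding W_def by linarith
    qed
    show "(\<forall>\<omega>\<in>space M. W i \<omega> \<le> 0)
        \<or> (0 < \<bar>mu i - th\<bar>\<^sup>2 \<and> expectation (\<lambda>\<omega>. exp (\<bar>mu i - th\<bar>\<^sup>2 * W i \<omega>)) \<le> exp (- 40 * k / al))"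
      if "i \<in> I" for i
      using bandit_arm.tau_within_budget_or_exp_moment_le[OF arms[OF that] assms(4-9)]
      by (simp add: W_def B_def)
  qed (use assms(4,7) in auto)
  moreover have "{\<omega>\<in>space M. 0 < (\<Sum>i\<in>I. W i \<omega>)} \<in> events"
  proof -
    have "(\<lambda>\<omega>. \<Sum>i\<in>I. W i \<omega>) \<in> borel_measurable M"
      using indep by (intro borel_measurable_sum) (simp add: indep_vars_def)
    then show ?thesis
      by measurable
  qed
  moreover have "{\<omega>\<in>space M. real (\<Sum>i\<in>I. tau (X i) th al (x - k) \<omega>) \<le> (\<Sum>i\<in>I. B i)}
      = space M - {\<omega>\<in>space M. 0 < (\<Sum>i\<in>I. W i \<omega>)}"
    by (auto simp: W_def sum_subtractf)
  ultimately show ?thesis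
    by (simp add: prob_compl B_def)
qed

theorem lemma8:
  fixes M :: "'a measure" and X :: "nat \<Rightarrow> nat \<Rightarrow> 'a \<Rightarrow> real"
    and mu :: "nat \<Rightarrow> real" and th al k :: real and K T :: nat
  assumes "prob_space M"
    and "K \<ge> 2"
    and "\<And>i s. i < K \<Longrightarrow> s \<ge> 1 \<Longrightarrow> X i s \<in> borel_measurable M"
    and "\<And>i s \<omega>. i < K \<Longrightarrow> s \<ge> 1 \<Longrightarrow> \<omega> \<in> space M \<Longrightarrow> X i s \<omega> \<in> {0..1}"
    and "prob_space.indep_vars M (\<lambda>_. borel) (\<lambda>(i, s). X i s) ({..<K} \<times> {1..})"
    and "\<And>i s. i < K \<Longrightarrow> s \<ge> 1 \<Longrightarrow> distr M borel (X i s) = distr M borel (X i 1)"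
    and "\<And>i. i < K \<Longrightarrow> prob_space.expectation M (X i 1) = mu i"
    and "0 < th" and "th < 1"
    and "0 < al" and "al \<le> 8"
    and "real T \<ge> Mconst al * real K"
    and "0 \<le> k" and "k < Lambda al th mu K (real T)"
  shows "measure M {\<omega> \<in> space M.
            (\<Sum>i<K. tau (X i) th al (Lambda al th mu K (real T) - k) \<omega>) \<le> T}
         \<ge> 1 - exp (- 40 * k / al)"
proof -
  interpret prob_space M
    by (rule assms(1))
  define Lam where "Lam = Lambda al th mu K (real T)"
  have arm: "bandit_arm M (X i) (mu i)" if "i < K" for i
    by (rule bandit_arm_of_row[OF assms(5) _ assms(4)[OF that] assms(6)[OF that] assms(7)[OF that]])
      (simp add: that)
  have "\<bar>mu i - th\<bar> \<le> 1" if "i < K" for i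
    using bandit_arm.mean_in_unit[OF arm[OF that]] assms(8,9) by auto
  then have "0 \<le> Lam" "(\<Sum>i<K. gfun al \<bar>mu i - th\<bar> Lam) = T / Mconst al"
    using Lambda_spec[OF assms(10,11), of K mu th "real T"] assms(2,12)
    by (auto simp: Lam_def Mconst_def field_simps)
  then have "(\<Sum>i<K. Mconst al * gfun al \<bar>mu i - th\<bar> Lam) = T"
    by (simp add: Mconst_def flip: sum_distrib_left)
  moreover have "1 - exp (- 40 * k / al) \<le> prob {\<omega>\<in>space M.
      real (\<Sum>i<K. tau (X i) th al (Lam - k) \<omega>) \<le> (\<Sum>i<K. Mconst al * gfun al \<bar>mu i - th\<bar> Lam)}"
    using assms(5,8-10,13,14) arm by (intro prob_total_tau_le_budget) (auto simp: Lam_def Mconst_def)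
  ultimately show ?thesis
    by (simp add: Lam_def del: of_nat_sum)
qed

end
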